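(* Let $k\ge 2$ and let $\mathrm{R}_{2k}=\{a_0,a_1,\dots,a_{2k-1}\}$ be the dihedral quandle of order $2k$, i.e. the set $\mathbb{Z}_{2k}$ with operation $a_i\cdot a_j=a_{(2j-i)\bmod 2k}$. In the integral quandle ring $\mathbb{Z}[\mathrm{R}_{2k}]$, let $e_i=a_i-a_0$ for $i=1,\dots,2k-1$. Then $e_i\cdot e_j=e_i\cdot e_{k+j}$ for all $j=1,2,\dots,k-1$ and all $i=1,2,\dots,2k-1$.
   Context: The quandle ring $\mathbb{Z}[A]$ of a quandle $A$ is the free abelian group on $A$ with multiplication given by the bilinear extension of the quandle operation: $\left(\sum_i r_i a_i\right)\cdot\left(\sum_j s_j a_j\right)=\sum_{i,j} r_i s_j (a_i\cdot a_j)$. *)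

theory Defs
  imports Main
begin

definition dihedral_op :: "nat \<Rightarrow> nat \<Rightarrow> nat \<Rightarrow> nat" where
  "dihedral_op n i j = nat ((2 * int j - int i) mod int n)"

text \<open>Elements of the integral quandle ring Z[A] for a finite quandle with carrier A
  are represented as coefficient functions A -> int (zero outside A).\<close>
definition qbasis :: "'a \<Rightarrow> ('a \<Rightarrow> int)" where
  "qbasis a = (\<lambda>x. if x = a then 1 else 0)"

text \<open>Bilinear extension of the quandle operation:
  (sum_a u_a a) . (sum_b v_b b) = sum_{a,b} u_a v_b (a . b).\<close>
definition qring_mult :: "'a set \<Rightarrow> ('a \<Rightarrow> 'a \<Rightarrow> 'a) \<Rightarrow> ('a \<Rightarrow> int) \<Rightarrow> ('a \<Rightarrow> int) \<Rightarrow> ('a \<Rightarrow> int)" where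
  "qring_mult A op u v = (\<lambda>c. \<Sum>p\<in>{p \<in> A \<times> A. op (fst p) (snd p) = c}. u (fst p) * v (snd p))"

definition dihedral_e :: "nat \<Rightarrow> (nat \<Rightarrow> int)" where
  "dihedral_e i = qbasis i - qbasis 0"

end

theory Submission
  imports Defs
begin

text \<open>In the dihedral quandle of order 2k, right multiplication by a_j and by a_(k+j) coincide,
  because 2(k + j) = 2j mod 2k. The product u * a_b of the quandle ring depends only on right
  multiplication by a_b, and the product is linear in its right factor, so for every u
  u * e_j = u * a_j - u * a_0 = u * a_(k+j) - u * a_0 = u * e_(k+j).\<close>

lemma qring_mult_diff_right:
  "qring_mult A op u (v - w) = qring_mult A op u v - qring_mult A op u w"
  by (simp add: qring_mult_def fun_eq_iff right_diff_distrib sum_subtractf)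

lemma qring_mult_qbasis_right:
  assumes "finite A" "b \<in> A"
  shows "qring_mult A op u (qbasis b) = (\<lambda>c. \<Sum>a\<in>{a \<in> A. op a b = c}. u a)"
proof
  fix c
  let ?P = "{p \<in> A \<times> A. op (fst p) (snd p) = c}"
  have "qring_mult A op u (qbasis b) c = (\<Sum>p\<in>?P. if snd p = b then u (fst p) else 0)"
    unfolding qring_mult_def qbasis_def by (rule sum.cong) auto
  also have "\<dots> = (\<Sum>p\<in>{p \<in> ?P. snd p = b}. u (fst p))"
    using assms(1) by (simp add: sum.inter_filter if_if_eq_conj)
  also have "{p \<in> ?P. snd p = b} = (\<lambda>a. (a, b)) ` {a \<in> A. op a b = c}"
    using assms(2) by auto
  also have "(\<Sum>p\<in>\<dots>. u (fst p)) = (\<Sum>a\<in>{a \<in> A. op a b = c}. u a)"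
    by (simp add: sum.reindex inj_on_def)
  finally show "qring_mult A op u (qbasis b) c = (\<Sum>a\<in>{a \<in> A. op a b = c}. u a)" .
qed

lemma dihedral_op_add_half:
  "dihedral_op (2 * k) i (k + j) = dihedral_op (2 * k) i j"
proof -
  have "2 * int (k + j) - int i = (2 * int j - int i) + int (2 * k)"
    by simp
  then show ?thesis
    unfolding dihedral_op_def by (metis mod_add_self2)
qed

theorem lemma2p3:
  fixes k :: nat
  assumes "k \<ge> 2"
  shows "\<forall>i\<in>{1..2*k-1}. \<forall>j\<in>{1..k-1}.
           qring_mult {0..<2*k} (dihedral_op (2*k)) (dihedral_e i) (dihedral_e j)
         = qring_mult {0..<2*k} (dihedral_op (2*k)) (dihedral_e i) (dihedral_e (k+j))"
proof (intro ballI)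
  fix i j
  assume "j \<in> {1..k-1}"
  then have "j \<in> {0..<2*k}" "k + j \<in> {0..<2*k}" "0 \<in> {0..<2*k}"
    using assms by auto
  then show "qring_mult {0..<2*k} (dihedral_op (2*k)) (dihedral_e i) (dihedral_e j)
         = qring_mult {0..<2*k} (dihedral_op (2*k)) (dihedral_e i) (dihedral_e (k+j))"
    by (simp add: dihedral_e_def qring_mult_diff_right qring_mult_qbasis_right
        dihedral_op_add_half)
qed

end
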